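(* Let $\ell\ge1$ and consider the saturation model with $s=\ell$, i.e. thresholds $\underline{\eta}=(1,2,\dots,\ell)$, so the outcome of $y$ is $\min(y,\ell)$. For $j\ge1$ let $c_j=\frac{(\ell+1)^j-1}{\ell}$ (an integer), and let $p(c)$ be the word defined (for these thresholds) by $$p(c)=o(0)^{c}\,0\,o(1)^{c}\,0\,o(2)^{c}\cdots0\,o(\ell)^{c}\;1\,u(\ell)^{c}\;1\,u(\ell-1)^{c}\;1\,u(\ell-2)^{c}\cdots1\,u(0)^{c}\;0,$$ where $o(x)=0^{\ell-x}1^x$, $u(x)=1^x0^{\ell-x}$ and $w^c$ is the concatenation of $c$ copies of $w$. Define matrices recursively by $R_1=p(c_1)$ (a single row of length $2(\ell+1)^2$) and, for $i\ge2$, $R_i=\begin{bmatrix}p(c_i)\\ R_{i-1}R_{i-1}\cdots R_{i-1}\end{bmatrix}$, where the bottom block is the horizontal concatenation of $\ell+1$ copies of $R_{i-1}$ (so $R_i$ has $i$ rows and $2(\ell+1)^{i+1}$ columns). Let $R_i^{\infty}$ be the infinite horizontal periodic repetition of $R_i$, with columns indexed by $t\ge0$. Then for every $i\ge1$, every row index $r\in\{1,\dots,i\}$ (counted from the top) and every $t\ge0$, $$\min\Big(\sum_{u=t}^{t+\ell-1}R_i^{\infty}(r,u),\;\ell\Big)=g\Big(\big\lfloor t/(\ell+1)^{\,i+1-r}\big\rfloor \bmod 2(\ell+1)\Big),$$ where $g:\{0,\dots,2\ell+1\}\to\{0,\dots,\ell\}$ is given by $g(k)=k$ for $k\le\ell$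 and $g(k)=2\ell+1-k$ for $k\ge\ell+1$. Equivalently, the outcome matrix of $R_i^\infty$ over all length-$\ell$ bursts is the periodic repetition of $P_i\otimes\mathbf{1}^{\ell+1}$, where $P_1=(g(0),\dots,g(2\ell+1))$ and $P_i=\begin{bmatrix}(g(0),\dots,g(2\ell+1))\otimes\mathbf{1}^{(\ell+1)^{i-1}}\\ P_{i-1}\cdots P_{i-1}\end{bmatrix}$ ($\ell+1$ copies of $P_{i-1}$).
   Context: The sum $\sum_{u=t}^{t+\ell-1}R_i^\infty(r,u)$ is the number of ones the $r$-th test row has in common with the length-$\ell$ burst whose ones occupy positions $t,\dots,t+\ell-1$. $\mathbf{1}^m$ denotes the all-ones row of length $m$ and $\otimes$ the Kronecker product. *)

theory Defs
  imports Main
begin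

definition ow :: "nat \<Rightarrow> nat \<Rightarrow> nat list" where
  "ow l x = replicate (l - x) 0 @ replicate x 1"

definition uw :: "nat \<Rightarrow> nat \<Rightarrow> nat list" where
  "uw l x = replicate x 1 @ replicate (l - x) 0"

definition wpow :: "nat list \<Rightarrow> nat \<Rightarrow> nat list" where
  "wpow w c = concat (replicate c w)"

(* p(c) = o(0)^c 0 o(1)^c 0 ... 0 o(l)^c 1 u(l)^c 1 u(l-1)^c ... 1 u(0)^c 0 *)
definition pword :: "nat \<Rightarrow> nat \<Rightarrow> nat list" where
  "pword l c =
     concat (map (\<lambda>x. (if x = 0 then [] else [0]) @ wpow (ow l x) c) [0..<l+1])
     @ concat (map (\<lambda>x. [1] @ wpow (uw l (l - x)) c) [0..<l+1])
     @ [0]"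

definition cnum :: "nat \<Rightarrow> nat \<Rightarrow> nat" where
  "cnum l j = ((l + 1) ^ j - 1) div l"

(* R_i as a list of rows (top row first); R_0 = [] so that R_1 = [p(c_1)] *)
fun Rmat :: "nat \<Rightarrow> nat \<Rightarrow> nat list list" where
  "Rmat l 0 = []"
| "Rmat l (Suc i) = pword l (cnum l (Suc i)) # map (\<lambda>row. concat (replicate (l + 1) row)) (Rmat l i)"

(* R_i^infinity (r, u), rows r counted from 1 at the top, columns u from 0 *)
definition Rinf :: "nat \<Rightarrow> nat \<Rightarrow> nat \<Rightarrow> nat \<Rightarrow> nat" where
  "Rinf l i r u = (let row = Rmat l i ! (r - 1) in row ! (u mod length row))"

definition gfun :: "nat \<Rightarrow> nat \<Rightarrow> nat" where
  "gfun l k = (if k \<le> l then k else 2 * l + 1 - k)"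

end

theory Submission
  imports Defs
begin

text \<open>Prepending a \<open>0\<close> to \<open>p(c)\<close> cuts it into \<open>2(l+1)\<close> blocks of length \<open>N = c l + 1\<close>, each a
  separator bit followed by \<open>c\<close> copies of \<open>o(k)\<close> or of \<open>u(2l+1-k)\<close>. The window of \<open>l\<close> bits just
  after the separator of block \<open>k\<close> holds \<open>g(k)\<close> ones. Sliding the window by one position swaps
  a leaving bit for an entering one; they are equal, except when the leaving bit is a separator,
  and then the difference is exactly the change of \<open>g\<close> from one block to the next. So every
  window starting in block \<open>k\<close> holds \<open>g(k)\<close> ones. Row \<open>r\<close> of \<open>R\<^sub>i\<close> repeats \<open>p(c\<^sub>j)\<close> with
  \<open>j = i + 1 - r\<close>, whose block length is \<open>(l+1)\<^sup>j\<close>.\<close>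

lemma nth_concat_equal_length:
  assumes "\<forall>x\<in>set xs. length x = N" and "n < N * length xs"
  shows "concat xs ! n = xs ! (n div N) ! (n mod N)"
  using assms
proof (induction xs arbitrary: n)
  case Nil
  then show ?case by simp
next
  case (Cons x xs)
  have "N > 0" using Cons.prems by (cases N) auto
  show ?case
  proof (cases "n < N")
    case True
    then show ?thesis using Cons.prems by (simp add: nth_append)
  next
    case False
    then have "concat xs ! (n - N) = xs ! ((n - N) div N) ! ((n - N) mod N)"
      using Cons by auto
    moreover have "(n - N) div N = n div N - 1" "(n - N) mod N = n mod N" "n div N \<ge> 1"
      using False \<open>N > 0\<close> by (simp_all add: le_div_geq le_mod_geq)
    ultimately show ?thesis using Cons.prems False by (simp add: nth_append nth_Cons')
  qed
qed

lemma nth_concat_replicate: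
  assumes "n < k * length w"
  shows "concat (replicate k w) ! n = w ! (n mod length w)"
proof -
  have "n div length w < k" using assms by (simp add: less_mult_imp_div_less)
  then show ?thesis using assms
    by (subst nth_concat_equal_length[where N = "length w"]) (auto simp: mult.commute)
qed

lemma nth_concat_replicate_mod:
  assumes "k > 0"
  shows "concat (replicate k w) ! (u mod length (concat (replicate k w))) = w ! (u mod length w)"
proof (cases "w = []")
  case False
  have "length (concat (replicate k w)) = k * length w"
    by (simp add: length_concat sum_list_replicate)
  with assms False show ?thesis
    by (simp add: nth_concat_replicate mod_mod_cancel)
qed simp

lemma concat_replicate_concat_replicate:
  "concat (replicate n (concat (replicate k w))) = concat (replicate (n * k) w)"
  by (induction n) (simp_all add: replicate_add)

lemma length_wpow [simp]: "length (wpow w c) = c * length w"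
  by (simp add: wpow_def length_concat sum_list_replicate)

lemma nth_wpow: "i < c * length w \<Longrightarrow> wpow w c ! i = w ! (i mod length w)"
  by (simp add: wpow_def nth_concat_replicate)

text \<open>Block \<open>k \<le> l\<close> is \<open>0 o(k)\<^sup>c\<close>, block \<open>k > l\<close> is \<open>1 u(2l+1-k)\<^sup>c\<close>; \<open>pbit l k q\<close> is its entry
  \<open>q\<close>, and \<open>pseq l c m\<close> is entry \<open>m\<close> of the periodic repetition of \<open>0 # p(c)\<close> (without its
  trailing \<open>0\<close>), i.e. entry \<open>m - 1\<close> of \<open>p(c)\<^sup>\<infinity>\<close>.\<close>

definition pblock :: "nat \<Rightarrow> nat \<Rightarrow> nat \<Rightarrow> nat list" where
  "pblock l c k =
     (if k \<le> l then 0 # wpow (ow l k) c else 1 # wpow (uw l (2 * l + 1 - k)) c)"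

definition pbit :: "nat \<Rightarrow> nat \<Rightarrow> nat \<Rightarrow> nat" where
  "pbit l k q =
     (if q = 0 then (if l < k then 1 else 0)
      else if k \<le> l then (if l - k \<le> (q - 1) mod l then 1 else 0)
      else (if (q - 1) mod l < 2 * l + 1 - k then 1 else 0))"

definition pseq :: "nat \<Rightarrow> nat \<Rightarrow> nat \<Rightarrow> nat" where
  "pseq l c m = pbit l (m div (c * l + 1) mod (2 * (l + 1))) (m mod (c * l + 1))"

lemma length_pblock [simp]: "length (pblock l c k) = c * l + 1"
  by (simp add: pblock_def ow_def uw_def)

lemma nth_pblock:
  assumes "l \<ge> 1" and "q < c * l + 1"
  shows "pblock l c k ! q = pbit l k q"
proof (cases q)
  case 0
  then show ?thesis by (simp add: pblock_def pbit_def)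
next
  case (Suc p)
  then have "p < c * l" "p mod l < l" using assms by simp_all
  then show ?thesis using Suc
    by (simp add: pblock_def pbit_def nth_wpow ow_def uw_def nth_append)
qed

lemma pword_eq_blocks: "0 # pword l c = concat (map (pblock l c) [0..<2 * (l + 1)]) @ [0]"
proof -
  have split: "[0..<2 * (l + 1)] = [0..<l + 1] @ map (\<lambda>x. x + (l + 1)) [0..<l + 1]"
  proof -
    have "[0..<(l + 1) + (l + 1)] = [0..<l + 1] @ [l + 1..<(l + 1) + (l + 1)]"
      by (rule upt_add_eq_append) simp
    then show ?thesis by (simp only: map_add_upt mult_2)
  qed
  have ascending: "0 # concat (map (\<lambda>x. (if x = 0 then [] else [0]) @ wpow (ow l x) c) [0..<l + 1])
      = concat (map (pblock l c) [0..<l + 1])"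
  proof -
    have tail: "map (\<lambda>x. (if x = 0 then [] else [0]) @ wpow (ow l x) c) [1..<l + 1]
        = map (pblock l c) [1..<l + 1]"
      by (auto simp: pblock_def)
    have head: "[0..<l + 1] = 0 # [1..<l + 1]" by (simp add: upt_rec)
    show ?thesis unfolding head list.map concat.simps tail by (simp add: pblock_def)
  qed
  have descending: "map (\<lambda>x. [1] @ wpow (uw l (l - x)) c) [0..<l + 1]
      = map (pblock l c) (map (\<lambda>x. x + (l + 1)) [0..<l + 1])"
    by (auto simp: pblock_def)
  show ?thesis
    unfolding pword_def split map_append concat_append descending ascending[symmetric]
    by simp
qed

lemma nth_pblocks_mod:
  assumes "l \<ge> 1"
  shows "concat (map (pblock l c) [0..<2 * (l + 1)]) ! (m mod (2 * (l + 1) * (c * l + 1)))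
       = pseq l c m"
proof -
  define N where "N = c * l + 1"
  define M where "M = 2 * (l + 1)"
  have "N > 0" unfolding N_def by simp
  have "m mod (M * N) = m mod N + (m div N mod M) * N"
    using mod_mult2_eq[of m N M] by (simp add: ac_simps)
  then have parts: "m mod (M * N) div N = m div N mod M" "m mod (M * N) mod N = m mod N"
    using \<open>N > 0\<close> by simp_all
  have "M > 0" unfolding M_def by simp
  have "\<forall>x\<in>set (map (pblock l c) [0..<M]). length x = N" unfolding N_def by simp
  moreover have "m mod (M * N) < N * length (map (pblock l c) [0..<M])"
    using \<open>M > 0\<close> \<open>N > 0\<close> by (simp add: ac_simps)
  ultimately have "concat (map (pblock l c) [0..<M]) ! (m mod (M * N))
      = map (pblock l c) [0..<M] ! (m div N mod M) ! (m mod N)"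
    by (simp only: nth_concat_equal_length parts)
  also have "\<dots> = pblock l c (m div N mod M) ! (m mod N)"
    using \<open>M > 0\<close> by (simp del: upt_Suc)
  also have "\<dots> = pbit l (m div N mod M) (m mod N)"
    using assms by (simp add: nth_pblock N_def)
  finally show ?thesis unfolding pseq_def N_def M_def .
qed

lemma length_pword: "length (pword l c) = 2 * (l + 1) * (c * l + 1)"
  using arg_cong[OF pword_eq_blocks, of length]
  by (simp add: length_concat o_def sum_list_triv)

lemma nth_pword_mod:
  assumes "l \<ge> 1"
  shows "pword l c ! (u mod (2 * (l + 1) * (c * l + 1))) = pseq l c (Suc u)"
proof -
  define L where "L = 2 * (l + 1) * (c * l + 1)"
  define blocks where "blocks = concat (map (pblock l c) [0..<2 * (l + 1)])"
  have "length blocks = L"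
    unfolding blocks_def L_def by (simp add: length_concat o_def sum_list_triv)
  have "u mod L < L" unfolding L_def by simp
  have "pword l c ! (u mod L) = (0 # pword l c) ! Suc (u mod L)" by simp
  also have "\<dots> = (blocks @ [0]) ! Suc (u mod L)" by (simp only: blocks_def pword_eq_blocks)
  also have "\<dots> = blocks ! (Suc u mod L)"
  proof (cases "Suc (u mod L) < L")
    case True
    then show ?thesis using \<open>length blocks = L\<close> by (simp add: nth_append mod_Suc)
  next
    case False
    with \<open>u mod L < L\<close> have "Suc (u mod L) = L" by linarith
    moreover have "blocks ! 0 = 0"
      unfolding blocks_def by (simp add: upt_conv_Cons pblock_def del: upt_Suc)
    ultimately show ?thesis using \<open>length blocks = L\<close> by (simp add: nth_append mod_Suc)
  qed
  also have "\<dots> = pseq l c (Suc u)"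
    unfolding blocks_def L_def by (rule nth_pblocks_mod[OF assms])
  finally show ?thesis unfolding L_def .
qed

lemma pbit_add_period:
  assumes "q \<ge> 1"
  shows "pbit l k (q + l) = pbit l k q"
proof -
  have "(q + l - 1) mod l = (q - 1) mod l"
    using assms by (metis Nat.add_diff_assoc2 mod_add_self2)
  with assms show ?thesis by (simp add: pbit_def)
qed

lemma gfun_add_pbit_separator:
  assumes "l \<ge> 1" and "k < 2 * (l + 1)"
  shows "gfun l (Suc k mod (2 * (l + 1))) + pbit l (Suc k mod (2 * (l + 1))) 0
       = gfun l k + pbit l (Suc k mod (2 * (l + 1))) l"
proof -
  have "(l - 1) mod l = l - 1" using assms by simp
  show ?thesis
  proof (cases "Suc k = 2 * (l + 1)")
    case True
    then show ?thesis using assms \<open>(l - 1) mod l = l - 1\<close> by (simp add: gfun_def pbit_def)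
  next
    case False
    then have "Suc k mod (2 * (l + 1)) = Suc k" using assms by simp
    then show ?thesis using assms False \<open>(l - 1) mod l = l - 1\<close>
      by (auto simp add: gfun_def pbit_def)
  qed
qed

text \<open>After its separator a block is \<open>l\<close>-periodic, and it continues seamlessly into the next
  block past that block's separator.\<close>

lemma pbit_next_block:
  assumes "l \<ge> 1" and "q \<ge> 1" and "k < 2 * (l + 1)"
  shows "pbit l k q = pbit l (Suc k mod (2 * (l + 1))) ((q - 1) mod l)"
proof -
  define e where "e = (q - 1) mod l"
  then have e: "(q - Suc 0) mod l = e" by simp
  have "e < l" using assms unfolding e_def by simp
  then have pred_e: "e \<noteq> 0 \<Longrightarrow> (e - 1) mod l = e - 1" by simp
  show ?thesis
  proof (cases "Suc k = 2 * (l + 1)")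
    case True
    then show ?thesis using assms \<open>e < l\<close> pred_e by (auto simp add: pbit_def e)
  next
    case False
    then have "Suc k mod (2 * (l + 1)) = Suc k" using assms by simp
    then show ?thesis using assms False \<open>e < l\<close> pred_e by (auto simp add: pbit_def e)
  qed
qed

lemma pseq_slide:
  assumes "l \<ge> 1" and "c \<ge> 1" and "m \<ge> 1"
  shows "gfun l (m div (c * l + 1) mod (2 * (l + 1))) + pseq l c m
       = gfun l ((m - 1) div (c * l + 1) mod (2 * (l + 1))) + pseq l c (m + l)"
proof -
  define N where "N = c * l + 1"
  define M where "M = 2 * (l + 1)"
  define a where "a = m div N"
  define q where "q = m mod N"
  have "l < N" using assms unfolding N_def by (simp add: le_less_trans[of l "c * l"])
  have m: "m = a * N + q" unfolding a_def q_def by simp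
  have "q < N" unfolding q_def using \<open>l < N\<close> by simp
  have "a mod M < M" unfolding M_def by simp
  consider (separator) "q = 0" | (inside) "q \<ge> 1" "q + l < N" | (crossing) "q \<ge> 1" "q + l \<ge> N"
    by linarith
  then show ?thesis
  proof cases
    case separator
    with m \<open>m \<ge> 1\<close> obtain b where "a = Suc b" by (cases a) auto
    have "(m - 1) div N = b"
      using m separator \<open>a = Suc b\<close> \<open>l < N\<close> by (intro div_nat_eqI) (simp_all add: algebra_simps)
    moreover have "m + l = a * N + l" using m separator by simp
    then have "(m + l) div N = a" "(m + l) mod N = l" using \<open>l < N\<close> by simp_all
    moreover have "Suc (b mod M) mod M = a mod M"
      unfolding \<open>a = Suc b\<close> by (simp add: mod_Suc_eq)
    moreover have "b mod M < M" unfolding M_def by simp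
    ultimately show ?thesis
      using gfun_add_pbit_separator[OF \<open>l \<ge> 1\<close>, of "b mod M"] separator
      unfolding pseq_def a_def q_def N_def[symmetric] M_def[symmetric] by simp
  next
    case inside
    have "(m - 1) div N = a" "(m + l) div N = a"
      using m inside by (auto intro!: div_nat_eqI simp: algebra_simps)
    moreover have "(m + l) mod N = q + l"
      using m inside by (intro mod_nat_eqI) simp_all
    ultimately show ?thesis using pbit_add_period[OF \<open>q \<ge> 1\<close>]
      unfolding pseq_def a_def q_def N_def[symmetric] M_def[symmetric] by simp
  next
    case crossing
    define e where "e = q + l - N"
    have "e < l" using \<open>q < N\<close> crossing unfolding e_def by linarith
    have "(m - 1) div N = a" "(m + l) div N = Suc a"
      using m crossing \<open>q < N\<close> \<open>l < N\<close> unfolding e_def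
      by (auto intro!: div_nat_eqI simp: algebra_simps)
    moreover have "(m + l) mod N = e"
      using m crossing \<open>e < l\<close> \<open>l < N\<close> unfolding e_def
      by (intro mod_nat_eqI) (simp_all add: algebra_simps)
    moreover have "(q - 1) mod l = e"
    proof -
      have "q - 1 = e + (c - 1) * l"
        using crossing \<open>c \<ge> 1\<close> unfolding e_def N_def by (simp add: diff_mult_distrib)
      then show ?thesis using \<open>e < l\<close> by simp
    qed
    moreover have "Suc (a mod M) mod M = Suc a mod M" by (simp add: mod_Suc_eq)
    ultimately show ?thesis
      using pbit_next_block[OF \<open>l \<ge> 1\<close> \<open>q \<ge> 1\<close> \<open>a mod M < M\<close>[unfolded M_def]]
      unfolding pseq_def a_def q_def N_def[symmetric] M_def[symmetric] by simp
  qed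
qed

lemma pseq_window_sum:
  assumes "l \<ge> 1" and "c \<ge> 1"
  shows "(\<Sum>u = t..<t + l. pseq l c (Suc u)) = gfun l (t div (c * l + 1) mod (2 * (l + 1)))"
proof (induction t)
  case 0
  have "pseq l c (Suc u) = 0" if "u < l" for u
  proof -
    have "l \<le> c * l" using \<open>c \<ge> 1\<close> by simp
    then have "Suc u < c * l + 1" using that by linarith
    then show ?thesis using that by (simp add: pseq_def pbit_def)
  qed
  then show ?case by (simp add: gfun_def)
next
  case (Suc t)
  let ?f = "\<lambda>u. pseq l c (Suc u)"
  have "sum ?f {t..<t + l} = ?f t + sum ?f {Suc t..<t + l}"
    using \<open>l \<ge> 1\<close> by (simp add: sum.atLeast_Suc_lessThan)
  moreover have "sum ?f {Suc t..<Suc t + l} = sum ?f {Suc t..<t + l} + ?f (t + l)"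
    using \<open>l \<ge> 1\<close> by simp
  moreover have "gfun l (Suc t div (c * l + 1) mod (2 * (l + 1))) + ?f t
      = gfun l (t div (c * l + 1) mod (2 * (l + 1))) + ?f (t + l)"
    using pseq_slide[OF assms, of "Suc t"] by simp
  ultimately show ?case using Suc.IH by simp
qed

lemma length_Rmat [simp]: "length (Rmat l i) = i"
  by (induction i) simp_all

lemma nth_Rmat:
  "r < i \<Longrightarrow> Rmat l i ! r = concat (replicate ((l + 1) ^ r) (pword l (cnum l (i - r))))"
proof (induction i arbitrary: r)
  case 0
  then show ?case by simp
next
  case (Suc i)
  show ?case
  proof (cases r)
    case 0
    then show ?thesis by simp
  next
    case (Suc r')
    have IH: "Rmat l i ! r' = concat (replicate ((l + 1) ^ r') (pword l (cnum l (i - r'))))"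
      using Suc.IH[of r'] Suc.prems \<open>r = Suc r'\<close> by simp
    have "Rmat l (Suc i) ! r = concat (replicate (l + 1) (Rmat l i ! r'))"
      using Suc.prems \<open>r = Suc r'\<close> by simp
    also have "\<dots> = concat (replicate ((l + 1) * (l + 1) ^ r') (pword l (cnum l (i - r'))))"
      unfolding IH by (rule concat_replicate_concat_replicate)
    also have "\<dots> = concat (replicate ((l + 1) ^ r) (pword l (cnum l (Suc i - r))))"
      using \<open>r = Suc r'\<close> by simp
    finally show ?thesis .
  qed
qed

lemma cnum_mult_add_one:
  assumes "l \<ge> 1"
  shows "cnum l j * l + 1 = (l + 1) ^ j"
proof -
  have "(l + 1) ^ j mod l = 1 mod l"
    by (metis mod_add_self1 power_mod power_one)
  then have "l dvd (l + 1) ^ j - 1"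
    by (metis mod_eq_dvd_iff_nat one_le_power le_add2)
  then show ?thesis using assms by (simp add: cnum_def)
qed

theorem mainTheorem3:
  fixes l i r t :: nat
  assumes "l \<ge> 1" and "i \<ge> 1" and "1 \<le> r" and "r \<le> i"
  shows "min (\<Sum>u = t..<t + l. Rinf l i r u) l
           = gfun l ((t div (l + 1) ^ (i + 1 - r)) mod (2 * (l + 1)))"
proof -
  define c where "c = cnum l (i + 1 - r)"
  have period: "(l + 1) ^ (i + 1 - r) = c * l + 1"
    unfolding c_def using cnum_mult_add_one[OF \<open>l \<ge> 1\<close>] by simp
  have "c \<ge> 1"
  proof (rule ccontr)
    assume "\<not> c \<ge> 1"
    then have "(l + 1) ^ (i + 1 - r) = 1" using period by simp
    with assms show False by simp
  qed
  have row: "Rmat l i ! (r - 1) = concat (replicate ((l + 1) ^ (r - 1)) (pword l c))"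
    using nth_Rmat[of "r - 1" i l] assms unfolding c_def by (simp add: Suc_diff_le)
  have copies: "(l + 1) ^ (r - 1) > 0" by simp
  have "Rinf l i r u = pseq l c (Suc u)" for u
    unfolding Rinf_def row Let_def nth_concat_replicate_mod[OF copies] length_pword
    by (rule nth_pword_mod[OF \<open>l \<ge> 1\<close>])
  then have "(\<Sum>u = t..<t + l. Rinf l i r u) = gfun l (t div (c * l + 1) mod (2 * (l + 1)))"
    using pseq_window_sum[OF \<open>l \<ge> 1\<close> \<open>c \<ge> 1\<close>] by simp
  moreover have "gfun l k \<le> l" for k by (simp add: gfun_def) linarith
  ultimately show ?thesis unfolding period by simp
qed

end
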